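(* Let $(S,g)$ be a timed dynamical system. Then the unique timing map $\tau$ on $(S,g)$ is given by $\tau_s=\sup\{n\in\mathbb{N}: g^n(w)=s\text{ for some }w\in S\}$ (with value $\infty$ if the set is unbounded).
   Context: A dynamical system is a pair $(S,g)$ with $S$ a set and $g:S\to S$. A state $s$ is initial if $s\neq g(w)$ for every $w\in S$. A timing map is a map $\tau:S\to\mathbb{N}\cup\{\infty\}$ such that (a) $\tau_s=0$ for every initial state $s$, and (b) $\tau_{g(s)}=\tau_s+1$ for all $s$ (with $\infty+1=\infty$). The system is timed if a timing map exists. *)

theory Defs
  imports Main "HOL-Library.Extended_Nat"
begin

definition dynamical_system :: "'a set \<Rightarrow> ('a \<Rightarrow> 'a) \<Rightarrow> bool" where
  "dynamical_system S g \<longleftrightarrow> (\<forall>s\<in>S. g s \<in> S)"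

definition initial_state :: "'a set \<Rightarrow> ('a \<Rightarrow> 'a) \<Rightarrow> 'a \<Rightarrow> bool" where
  "initial_state S g s \<longleftrightarrow> s \<in> S \<and> (\<forall>w\<in>S. s \<noteq> g w)"

definition timing_map :: "'a set \<Rightarrow> ('a \<Rightarrow> 'a) \<Rightarrow> ('a \<Rightarrow> enat) \<Rightarrow> bool" where
  "timing_map S g \<tau> \<longleftrightarrow>
     (\<forall>s\<in>S. initial_state S g s \<longrightarrow> \<tau> s = 0) \<and>
     (\<forall>s\<in>S. \<tau> (g s) = \<tau> s + 1)"

definition timed :: "'a set \<Rightarrow> ('a \<Rightarrow> 'a) \<Rightarrow> bool" where
  "timed S g \<longleftrightarrow> (\<exists>\<tau>. timing_map S g \<tau>)"

end

theory Submission
  imports Defs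
begin

text \<open>Along an orbit a timing map grows by one per step, so \<open>\<tau> s \<ge> n\<close> whenever
  \<open>s = g\<^sup>n w\<close>. Conversely, a state with \<open>\<tau> s > 0\<close> is not initial, hence has a predecessor
  whose time is one less; iterating, \<open>\<tau> s \<ge> k\<close> yields a \<open>k\<close>-step preimage of \<open>s\<close>. So
  \<open>\<tau> s\<close> is the supremum of the lengths of orbit segments ending in \<open>s\<close>, which determines
  \<open>\<tau>\<close> on \<open>S\<close>; since some timing map exists, this supremum is one.\<close>

definition orbit_depth :: "'a set \<Rightarrow> ('a \<Rightarrow> 'a) \<Rightarrow> 'a \<Rightarrow> enat" where
  "orbit_depth S g s = Sup {enat n | n. \<exists>w\<in>S. (g ^^ n) w = s}"

lemma enat_le_by_finite_lower_bounds:
  fixes x y :: enat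
  assumes "\<And>k. enat k \<le> x \<Longrightarrow> enat k \<le> y"
  shows "x \<le> y"
proof (rule ccontr)
  assume "\<not> x \<le> y"
  then obtain m where "y = enat m" "enat m < x"
    by (cases y) auto
  then show False
    using assms[of "Suc m"] by (simp add: Suc_ile_eq)
qed

lemma dynamical_system_funpow_closed:
  assumes "dynamical_system S g" and "w \<in> S"
  shows "(g ^^ n) w \<in> S"
  using assms by (induction n) (auto simp: dynamical_system_def)

lemma timing_map_funpow:
  assumes ds: "dynamical_system S g" and tm: "timing_map S g \<tau>" and "w \<in> S"
  shows "\<tau> ((g ^^ n) w) = \<tau> w + enat n"
proof (induction n)
  case 0
  then show ?case by (simp add: zero_enat_def)
next
  case (Suc n)
  have "(g ^^ n) w \<in> S"
    using dynamical_system_funpow_closed[OF ds \<open>w \<in> S\<close>] .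
  then have "\<tau> ((g ^^ Suc n) w) = \<tau> ((g ^^ n) w) + 1"
    using tm by (simp add: timing_map_def)
  also have "\<dots> = \<tau> w + enat (Suc n)"
    by (simp add: Suc.IH add.assoc one_enat_def)
  finally show ?case .
qed

lemma timing_map_funpow_preimage:
  assumes tm: "timing_map S g \<tau>"
  shows "s \<in> S \<Longrightarrow> enat k \<le> \<tau> s \<Longrightarrow> \<exists>w\<in>S. (g ^^ k) w = s"
proof (induction k arbitrary: s)
  case 0
  then show ?case by auto
next
  case (Suc k)
  have "\<not> initial_state S g s"
    using tm Suc.prems by (auto simp: timing_map_def zero_enat_def)
  then obtain v where v: "v \<in> S" "s = g v"
    using Suc.prems(1) by (auto simp: initial_state_def)
  with tm have "\<tau> s = \<tau> v + 1"
    by (simp add: timing_map_def)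
  with Suc.prems(2) have "enat k \<le> \<tau> v"
    by (cases "\<tau> v") (auto simp: one_enat_def)
  then obtain w where "w \<in> S" "(g ^^ k) w = v"
    using Suc.IH v(1) by blast
  with v show ?case
    by (intro bexI[of _ w]) (simp_all add: funpow_Suc_right)
qed

lemma timing_map_eq_orbit_depth:
  assumes ds: "dynamical_system S g" and tm: "timing_map S g \<tau>" and s: "s \<in> S"
  shows "\<tau> s = orbit_depth S g s"
  unfolding orbit_depth_def
proof (rule antisym)
  show "\<tau> s \<le> Sup {enat n | n. \<exists>w\<in>S. (g ^^ n) w = s}"
  proof (rule enat_le_by_finite_lower_bounds)
    fix k
    assume "enat k \<le> \<tau> s"
    then show "enat k \<le> Sup {enat n | n. \<exists>w\<in>S. (g ^^ n) w = s}"
      using timing_map_funpow_preimage[OF tm s] by (auto intro: Sup_upper)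
  qed
next
  show "Sup {enat n | n. \<exists>w\<in>S. (g ^^ n) w = s} \<le> \<tau> s"
    using timing_map_funpow[OF ds tm] by (auto intro!: Sup_least)
qed

lemma timing_map_cong:
  assumes "dynamical_system S g" and "timing_map S g \<tau>" and "\<And>s. s \<in> S \<Longrightarrow> \<tau>' s = \<tau> s"
  shows "timing_map S g \<tau>'"
  using assms by (simp add: timing_map_def dynamical_system_def)

theorem fact5p1:
  fixes S :: "'a set" and g :: "'a \<Rightarrow> 'a"
  assumes "dynamical_system S g" and "timed S g"
  shows "timing_map S g (\<lambda>s. Sup {enat n | n. \<exists>w\<in>S. (g ^^ n) w = s})
         \<and> (\<forall>\<tau>. timing_map S g \<tau> \<longrightarrow>
               (\<forall>s\<in>S. \<tau> s = Sup {enat n | n. \<exists>w\<in>S. (g ^^ n) w = s}))"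
proof -
  obtain \<tau> where tm: "timing_map S g \<tau>"
    using assms(2) by (auto simp: timed_def)
  have "timing_map S g (orbit_depth S g)"
    using timing_map_cong[OF assms(1) tm] timing_map_eq_orbit_depth[OF assms(1) tm] by simp
  moreover have "\<forall>\<tau>. timing_map S g \<tau> \<longrightarrow> (\<forall>s\<in>S. \<tau> s = orbit_depth S g s)"
    using timing_map_eq_orbit_depth[OF assms(1)] by blast
  ultimately show ?thesis
    by (simp add: orbit_depth_def[abs_def])
qed

end
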